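(* Let $G$ be a connected graph with $|V(G)| \ge 3$. Then $\det(G) \le 2\det'(G)$.
   Context: A vertex subset $S$ of $G$ is a vertex determining set if the only automorphism of $G$ fixing every vertex of $S$ is the identity; the determining number $\det(G)$ is the minimum size of a vertex determining set. For a graph $G$ with at most one isolated vertex and no component isomorphic to $K_2$, an edge subset $T$ is an edge determining set if the only automorphism $\phi$ of $G$ satisfying $\{\phi(u),\phi(v)\}=\{u,v\}$ for all $\{u,v\}\in T$ is the identity; the determining index $\det'(G)$ is the minimum size of an edge determining set. *)

theory Defs
  imports Main
begin

definition simple_graph :: "'a set \<Rightarrow> ('a \<Rightarrow> 'a \<Rightarrow> bool) \<Rightarrow> bool" where
  "simple_graph V E \<longleftrightarrow> finite V \<and> (\<forall>u v. E u v \<longrightarrow> u \<in> V \<and> v \<in> V)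
     \<and> (\<forall>u v. E u v \<longrightarrow> E v u) \<and> (\<forall>u. \<not> E u u)"

definition connected_graph :: "'a set \<Rightarrow> ('a \<Rightarrow> 'a \<Rightarrow> bool) \<Rightarrow> bool" where
  "connected_graph V E \<longleftrightarrow> (\<forall>u\<in>V. \<forall>v\<in>V. E\<^sup>*\<^sup>* u v)"

definition edges :: "'a set \<Rightarrow> ('a \<Rightarrow> 'a \<Rightarrow> bool) \<Rightarrow> 'a set set" where
  "edges V E = {{u, v} | u v. u \<in> V \<and> v \<in> V \<and> E u v}"

definition automorphism :: "'a set \<Rightarrow> ('a \<Rightarrow> 'a \<Rightarrow> bool) \<Rightarrow> ('a \<Rightarrow> 'a) \<Rightarrow> bool" where
  "automorphism V E f \<longleftrightarrow> bij_betw f V V \<and> (\<forall>u\<in>V. \<forall>v\<in>V. E (f u) (f v) \<longleftrightarrow> E u v)"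

definition vertex_determining_set :: "'a set \<Rightarrow> ('a \<Rightarrow> 'a \<Rightarrow> bool) \<Rightarrow> 'a set \<Rightarrow> bool" where
  "vertex_determining_set V E S \<longleftrightarrow> S \<subseteq> V \<and>
     (\<forall>f. automorphism V E f \<and> (\<forall>x\<in>S. f x = x) \<longrightarrow> (\<forall>x\<in>V. f x = x))"

definition edge_determining_set :: "'a set \<Rightarrow> ('a \<Rightarrow> 'a \<Rightarrow> bool) \<Rightarrow> 'a set set \<Rightarrow> bool" where
  "edge_determining_set V E T \<longleftrightarrow> T \<subseteq> edges V E \<and>
     (\<forall>f. automorphism V E f \<and> (\<forall>e\<in>T. f ` e = e) \<longrightarrow> (\<forall>x\<in>V. f x = x))"

definition determining_number :: "'a set \<Rightarrow> ('a \<Rightarrow> 'a \<Rightarrow> bool) \<Rightarrow> nat" where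
  "determining_number V E = (LEAST k. \<exists>S. vertex_determining_set V E S \<and> card S = k)"

definition determining_index :: "'a set \<Rightarrow> ('a \<Rightarrow> 'a \<Rightarrow> bool) \<Rightarrow> nat" where
  "determining_index V E = (LEAST k. \<exists>T. edge_determining_set V E T \<and> card T = k)"

end

theory Submission
  imports Defs
begin

text \<open>
  Every edge determining set T yields the vertex determining set \<open>\<Union>T\<close> of at most \<open>2 |T|\<close>
  vertices: an automorphism fixing both ends of every edge of T fixes every edge of T setwise.
  It remains to see that a minimal edge determining set exists, i.e. that some edge set is
  determining; for a connected graph on at least three vertices the set of all edges is. Indeed,
  if an automorphism fixing every edge setwise moved a vertex v, it would swap v with a
  neighbour u, and an edge joining \<open>{u, v}\<close> to a third vertex could not be fixed.
\<close>

lemma rtranclp_enters_set: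
  assumes "E\<^sup>*\<^sup>* w z" "w \<notin> A" "z \<in> A"
  shows "\<exists>x y. x \<notin> A \<and> y \<in> A \<and> E x y"
  using assms by (induction rule: rtranclp_induct) blast+

lemma card_ge_3_obtain_outside_pair:
  assumes "card V \<ge> 3"
  obtains w where "w \<in> V" "w \<notin> {a, b}"
proof -
  have "card {a, b} \<le> 2"
    by (simp add: card_insert_le_m1)
  with assms have "\<not> V \<subseteq> {a, b}"
    using card_mono[of "{a, b}" V] by auto
  then show thesis
    using that by blast
qed

lemma edge_determining_set_edges:
  assumes sg: "simple_graph V E" and cg: "connected_graph V E" and c3: "card V \<ge> 3"
  shows "edge_determining_set V E (edges V E)"
  unfolding edge_determining_set_def
proof (intro conjI allI impI ballI)
  fix f v
  assume "automorphism V E f \<and> (\<forall>e\<in>edges V E. f ` e = e)" and vV: "v \<in> V"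
  then have inj: "inj_on f V" and fixes_edges: "\<forall>e\<in>edges V E. f ` e = e"
    unfolding automorphism_def bij_betw_def by blast+
  have EV: "\<And>a b. E a b \<Longrightarrow> a \<in> V \<and> b \<in> V" and Esym: "\<And>a b. E a b \<Longrightarrow> E b a"
    and Eirr: "\<And>a. \<not> E a a"
    using sg unfolding simple_graph_def by blast+
  have edge_end: "f a \<in> {a, b}" if "E a b" for a b
  proof -
    have "{a, b} \<in> edges V E"
      using that EV[OF that] unfolding edges_def by blast
    with fixes_edges have "f ` {a, b} = {a, b}"
      by (rule bspec)
    then show ?thesis
      by blast
  qed
  obtain w where "w \<in> V" "w \<noteq> v"
    using card_ge_3_obtain_outside_pair[OF c3, of v v] by blast
  with cg vV have "E\<^sup>*\<^sup>* v w"
    unfolding connected_graph_def by blast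
  then obtain u where Evu: "E v u"
    using \<open>w \<noteq> v\<close> by (cases rule: converse_rtranclpE) auto
  have uV: "u \<in> V" and uv: "u \<noteq> v"
    using EV[OF Evu] Eirr Evu by auto
  show "f v = v"
  proof (rule ccontr)
    assume "f v \<noteq> v"
    then have fvu: "f v = u"
      using edge_end[OF Evu] by blast
    have "f u \<noteq> u"
      using inj fvu uv uV vV unfolding inj_on_def by blast
    then have fuv: "f u = v"
      using edge_end[OF Esym[OF Evu]] by blast
    obtain w' where w'V: "w' \<in> V" and w'_out: "w' \<notin> {u, v}"
      using card_ge_3_obtain_outside_pair[OF c3] by blast
    with cg vV have "E\<^sup>*\<^sup>* w' v"
      unfolding connected_graph_def by blast
    then obtain x y where x_out: "x \<notin> {u, v}" and y_in: "y \<in> {u, v}" and "E x y"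
      using rtranclp_enters_set[OF _ w'_out] by blast
    then have "f y \<in> {y, x}"
      using edge_end Esym by blast
    moreover have "f y \<in> {u, v} - {y}"
      using y_in fvu fuv uv by auto
    ultimately show False
      using x_out by blast
  qed
qed simp

lemma vertex_determining_set_Union:
  assumes T: "edge_determining_set V E T"
  shows "vertex_determining_set V E (\<Union>T)"
  unfolding vertex_determining_set_def
proof (intro conjI allI impI)
  show "\<Union>T \<subseteq> V"
    using T unfolding edge_determining_set_def edges_def by blast
next
  fix f
  assume f: "automorphism V E f \<and> (\<forall>x\<in>\<Union>T. f x = x)"
  then have "\<forall>e\<in>T. f ` e = e"
    by (metis Union_upper image_cong image_ident subsetD)
  with f T show "\<forall>x\<in>V. f x = x"
    unfolding edge_determining_set_def by blast
qed

lemma card_Union_edges_le: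
  assumes "finite T" "T \<subseteq> edges V E"
  shows "card (\<Union>T) \<le> 2 * card T"
proof -
  have "card (\<Union>T) \<le> (\<Sum>e\<in>T. card e)"
    by (rule card_Union_le_sum_card)
  also have "\<dots> \<le> (\<Sum>e\<in>T. 2)"
    using assms(2) unfolding edges_def by (intro sum_mono) (auto simp: card_insert_le_m1)
  finally show ?thesis
    by simp
qed

lemma finite_edges:
  assumes "finite V"
  shows "finite (edges V E)"
proof -
  have "edges V E \<subseteq> Pow V"
    unfolding edges_def by blast
  with assms show ?thesis
    by (simp add: finite_subset)
qed

theorem theorem5:
  fixes V :: "'a set" and E :: "'a \<Rightarrow> 'a \<Rightarrow> bool"
  assumes "simple_graph V E" and "connected_graph V E" and "card V \<ge> 3"
  shows "determining_number V E \<le> 2 * determining_index V E"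
proof -
  have "\<exists>T. edge_determining_set V E T \<and> card T = determining_index V E"
    unfolding determining_index_def
    by (rule LeastI_ex) (use edge_determining_set_edges[OF assms] in blast)
  then obtain T where T: "edge_determining_set V E T" and cT: "card T = determining_index V E"
    by blast
  have "T \<subseteq> edges V E"
    using T unfolding edge_determining_set_def by blast
  moreover have "finite (edges V E)"
    using assms(1) finite_edges unfolding simple_graph_def by blast
  ultimately have "card (\<Union>T) \<le> 2 * card T"
    using card_Union_edges_le finite_subset by blast
  moreover have "determining_number V E \<le> card (\<Union>T)"
    unfolding determining_number_def
    using vertex_determining_set_Union[OF T] by (blast intro: Least_le)
  ultimately show ?thesis
    using cT by simp
qed

end
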